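(* For every $t\in I$, $\tau\in(0,T-t]$ and $x\in\mathbb{R}^n$, $$V(t,x)=\mathcal{E}\big(\mathrm{cl}\,\widetilde Y(\tau,t,x),P\big),\qquad \widetilde Y(\tau,t,x)=\bigcup_{u\in\mathcal{U}}\Big(J(t,t+\tau,x,u)+V\big(t+\tau,x(t+\tau;t,x,u)\big)\Big).$$
   Context: Setting (MOC). Fix $T>0$, $I=[0,T]$, integers $n,m,p\ge1$, nonempty compact $U\subset\mathbb{R}^m$. $f:\mathbb{R}^n\times U\to\mathbb{R}^n$ continuous with $\|f(x_1,u)-f(x_2,u)\|\le K_f\|x_1-x_2\|$, $\|f(x,u)\|\le M_f$. $L:\mathbb{R}^n\times U\to\mathbb{R}^p$ continuous with $\|L(x,u)\|\le M_L$, $\|L(x_1,u)-L(x_2,u)\|\le K_L\|x_1-x_2\|$. Controls $\mathcal{U}$: bounded Lebesgue measurable $u:I\to U$. $x(s;t,x,u)$ solves $\dot x=f(x,u(s))$ on $[t,T]$, $x(t)=x$; $J(t,t',x,u)=\int_t^{t'}L(x(s;t,x,u),u(s))ds$; $Y(t,x)=\{J(t,T,x,u):u\in\mathcal{U}\}$. $P\subset\mathbb{R}^p$: closed convex pointed cone containing $0$ with nonempty interior; $\mathcal{E}(S,P)=\{y\in S:(y-P)\cap S=\{y\}\}$; $V(t,x)=\mathcal{E}(\mathrm{cl}\,Y(t,x),P)$ (so $V(T,x)=\{0\}$). *)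

theory Defs
  imports "HOL-Analysis.Analysis"
begin

definition admissible_controls :: "real \<Rightarrow> 'c::euclidean_space set \<Rightarrow> (real \<Rightarrow> 'c) set" where
  "admissible_controls T U =
     {u. (\<forall>s\<in>{0..T}. u s \<in> U) \<and> u measurable_on {0..T} \<and> bounded (u ` {0..T})}"

text \<open>y is a (Caratheodory) solution of y' = f(y, u(s)) on [t,T] with y(t) = x,
  i.e. it is continuous and satisfies the integral equation.\<close>
definition is_traj :: "('a::euclidean_space \<Rightarrow> 'c \<Rightarrow> 'a) \<Rightarrow> real \<Rightarrow> real \<Rightarrow> 'a
     \<Rightarrow> (real \<Rightarrow> 'c) \<Rightarrow> (real \<Rightarrow> 'a) \<Rightarrow> bool" where
  "is_traj f T t x u y \<longleftrightarrow> continuous_on {t..T} y \<and>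
     (\<forall>s\<in>{t..T}. (\<lambda>r. f (y r) (u r)) integrable_on {t..s} \<and>
                 y s = x + integral {t..s} (\<lambda>r. f (y r) (u r)))"

text \<open>Cost J(t,t',x,u) along the trajectory y = x(.;t,x,u).\<close>
definition cost :: "('a \<Rightarrow> 'c \<Rightarrow> 'b::euclidean_space) \<Rightarrow> real \<Rightarrow> real
     \<Rightarrow> (real \<Rightarrow> 'a) \<Rightarrow> (real \<Rightarrow> 'c) \<Rightarrow> 'b" where
  "cost L t t' y u = integral {t..t'} (\<lambda>s. L (y s) (u s))"

definition Yset :: "('a::euclidean_space \<Rightarrow> 'c::euclidean_space \<Rightarrow> 'a) \<Rightarrow> ('a \<Rightarrow> 'c \<Rightarrow> 'b::euclidean_space)
     \<Rightarrow> 'c set \<Rightarrow> real \<Rightarrow> real \<Rightarrow> 'a \<Rightarrow> 'b set" where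
  "Yset f L U T t x = {cost L t T y u | u y. u \<in> admissible_controls T U \<and> is_traj f T t x u y}"

definition efficient :: "'b::real_vector set \<Rightarrow> 'b set \<Rightarrow> 'b set" where
  "efficient S P = {y \<in> S. ((\<lambda>p. y - p) ` P) \<inter> S = {y}}"

definition Vfun :: "('a::euclidean_space \<Rightarrow> 'c::euclidean_space \<Rightarrow> 'a) \<Rightarrow> ('a \<Rightarrow> 'c \<Rightarrow> 'b::euclidean_space)
     \<Rightarrow> 'c set \<Rightarrow> real \<Rightarrow> 'b set \<Rightarrow> real \<Rightarrow> 'a \<Rightarrow> 'b set" where
  "Vfun f L U T P t x = efficient (closure (Yset f L U T t x)) P"

definition Ytilde :: "('a::euclidean_space \<Rightarrow> 'c::euclidean_space \<Rightarrow> 'a) \<Rightarrow> ('a \<Rightarrow> 'c \<Rightarrow> 'b::euclidean_space)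
     \<Rightarrow> 'c set \<Rightarrow> real \<Rightarrow> 'b set \<Rightarrow> real \<Rightarrow> real \<Rightarrow> 'a \<Rightarrow> 'b set" where
  "Ytilde f L U T P \<tau> t x =
     \<Union> {(\<lambda>v. cost L t (t + \<tau>) y u + v) ` Vfun f L U T P (t + \<tau>) (y (t + \<tau>)) | u y.
          u \<in> admissible_controls T U \<and> is_traj f T t x u y}"

end

theory Submission
  imports Defs
begin

(* Write s = t + tau and Ytilde = Ytilde(tau,t,x).  The proof has two ingredients.
   (1) Order theory of the cone P: in a compact set every point dominates an efficient point
       (Zorn's lemma, chains having lower bounds by compactness), and if B lies in cl A, cl B is
       compact and every point of A dominates a point of B, then cl A and cl B have the same
       efficient points (the set cl B + P is closed and contains A).
   (2) Control theory: controls and trajectories can be restricted to [s,T] and concatenated at s,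
       and the cost is additive, so Y(t,x) is the union over u of J(t,s,x,u) + Y(s, x(s;t,x,u)).
   From (2), Ytilde lies in cl Y(t,x) (as V(s,.) lies in cl Y(s,.)) and is bounded; from (2) and the
   first half of (1), every point of Y(t,x) dominates a point of Ytilde.  The second half of (1)
   then yields E(cl Y(t,x), P) = E(cl Ytilde, P). *)

(* A convex pointed cone P induces the partial order "a dominates b iff a - b in P";
   efficiency (the definition efficient) is minimality for this order. *)
locale ordering_cone =
  fixes P :: "'b::real_normed_vector set"
  assumes convex: "convex P" and cone: "cone P" and pointed: "P \<inter> uminus ` P = {0}"
begin

lemma zero_mem: "0 \<in> P"
  using pointed by blast

lemma add_mem: "p \<in> P \<Longrightarrow> q \<in> P \<Longrightarrow> p + q \<in> P"
  using convex cone convex_cone by blast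

lemma antisym: "p \<in> P \<Longrightarrow> - p \<in> P \<Longrightarrow> p = 0"
  using pointed by (metis IntI image_eqI minus_minus singletonD)

lemma diff_trans: "x - y \<in> P \<Longrightarrow> y - z \<in> P \<Longrightarrow> x - z \<in> P"
  using add_mem[of "x - y" "y - z"] by simp

lemma diff_antisym: "x - y \<in> P \<Longrightarrow> y - x \<in> P \<Longrightarrow> x = y"
  using antisym[of "x - y"] by simp

lemma mem_efficient_iff:
  "y \<in> efficient S P \<longleftrightarrow> y \<in> S \<and> (\<forall>p\<in>P. y - p \<in> S \<longrightarrow> p = 0)"
proof -
  have "(\<lambda>p. y - p) ` P \<inter> S = {y} \<longleftrightarrow> (\<forall>p\<in>P. y - p \<in> S \<longrightarrow> p = 0)" if "y \<in> S"
  proof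
    assume eq: "(\<lambda>p. y - p) ` P \<inter> S = {y}"
    show "\<forall>p\<in>P. y - p \<in> S \<longrightarrow> p = 0"
    proof (intro ballI impI)
      fix p assume "p \<in> P" "y - p \<in> S"
      then have "y - p \<in> (\<lambda>p. y - p) ` P \<inter> S" by blast
      then show "p = 0" using eq by simp
    qed
  next
    assume "\<forall>p\<in>P. y - p \<in> S \<longrightarrow> p = 0"
    then show "(\<lambda>p. y - p) ` P \<inter> S = {y}" using that zero_mem by (force intro!: image_eqI[where x=0])
  qed
  then show ?thesis unfolding efficient_def by blast
qed

lemma finite_chain_has_least:
  assumes "finite C" "C \<noteq> {}"
    and chain: "\<And>a b. a \<in> C \<Longrightarrow> b \<in> C \<Longrightarrow> a - b \<in> P \<or> b - a \<in> P"
  shows "\<exists>m\<in>C. \<forall>c\<in>C. c - m \<in> P"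
  using assms(1,2) chain
proof (induction C rule: finite_ne_induct)
  case (singleton x)
  then show ?case using zero_mem by auto
next
  case (insert x F)
  then obtain m where m: "m \<in> F" "\<forall>c\<in>F. c - m \<in> P" by blast
  consider "x - m \<in> P" | "m - x \<in> P" using insert.prems m(1) by blast
  then show ?case
  proof cases
    case 1
    then show ?thesis using m zero_mem by auto
  next
    case 2
    have "c - x \<in> P" if "c \<in> F" for c
      using add_mem[OF bspec[OF m(2) that] 2] by simp
    then show ?thesis using zero_mem by auto
  qed
qed

lemma efficient_eq_if_dominated:
  assumes sub: "B \<subseteq> A" and dom: "\<And>a. a \<in> A \<Longrightarrow> \<exists>b\<in>B. a - b \<in> P"
  shows "efficient A P = efficient B P"
proof
  show "efficient A P \<subseteq> efficient B P"
  proof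
    fix a assume a: "a \<in> efficient A P"
    obtain b where b: "b \<in> B" "a - b \<in> P" using dom a mem_efficient_iff by blast
    have "a - (a - b) \<in> A" using b sub by auto
    then have "a = b" using a b(2) mem_efficient_iff by fastforce
    then show "a \<in> efficient B P" using a b(1) sub mem_efficient_iff by blast
  qed
  show "efficient B P \<subseteq> efficient A P"
  proof
    fix b assume b: "b \<in> efficient B P"
    have "p = 0" if p: "p \<in> P" "b - p \<in> A" for p
    proof -
      obtain b' where b': "b' \<in> B" "(b - p) - b' \<in> P" using dom p(2) by blast
      have "b - b' \<in> P" using add_mem[OF p(1) b'(2)] by simp
      moreover have "b - (b - b') \<in> B" using b'(1) by simp
      ultimately have "b - b' = 0" using b mem_efficient_iff by blast
      then have "- p \<in> P" using b'(2) by simp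
      then show "p = 0" using antisym p(1) by blast
    qed
    then show "b \<in> efficient A P" using b sub mem_efficient_iff by blast
  qed
qed

lemma closed_below:
  assumes "closed P"
  shows "closed {z. w - z \<in> P}"
proof -
  have "closed ((\<lambda>z. w - z) -` P)"
    by (rule continuous_closed_vimage[OF assms]) (intro continuous_intros)
  then show ?thesis by (simp add: vimage_def)
qed

(* Every chain in a nonempty compact set has a lower bound there: the sets of points below the
   chain elements have the finite intersection property. *)
lemma compact_chain_has_lower_bound:
  assumes closed: "closed P" and A: "compact A" "A \<noteq> {}" and CA: "C \<subseteq> A"
    and chain: "\<And>a b. a \<in> C \<Longrightarrow> b \<in> C \<Longrightarrow> a - b \<in> P \<or> b - a \<in> P"
  shows "\<exists>u\<in>A. \<forall>c\<in>C. c - u \<in> P"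
proof -
  have "A \<inter> (\<Inter>c\<in>C. {z. c - z \<in> P}) \<noteq> {}"
  proof (rule compact_imp_fip_image[OF A(1) closed_below[OF closed]])
    fix C' assume C': "finite C'" "C' \<subseteq> C"
    show "A \<inter> (\<Inter>c\<in>C'. {z. c - z \<in> P}) \<noteq> {}"
    proof (cases "C' = {}")
      case True
      then show ?thesis using A(2) by simp
    next
      case False
      then obtain m where "m \<in> C'" "\<forall>c\<in>C'. c - m \<in> P"
        using finite_chain_has_least[OF C'(1)] C'(2) chain by blast
      then show ?thesis using C'(2) CA by blast
    qed
  qed
  then show ?thesis by blast
qed

(* Existence of efficient points: every point a of a compact set A dominates an efficient point of
   A.  Zorn's lemma is applied to the part of A below a. *)
lemma exists_efficient_below:
  assumes closed: "closed P" and A: "compact A" and a: "a \<in> A"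
  shows "\<exists>m\<in>efficient A P. a - m \<in> P"
proof -
  define A' where "A' = A \<inter> {z. a - z \<in> P}"
  define above where "above = (\<lambda>z w. z - w \<in> P)"
  have A': "compact A'" "a \<in> A'"
    unfolding A'_def using compact_Int_closed[OF A closed_below[OF closed]] a zero_mem by auto
  have "partial_order_on A' (relation_of above A')"
    unfolding partial_order_on_def preorder_on_def refl_on_def trans_on_def antisym_on_def
  proof (intro conjI ballI impI)
    show "relation_of above A' \<subseteq> A' \<times> A'" by (auto simp: relation_of_def)
    show "(z, z) \<in> relation_of above A'" if "z \<in> A'" for z
      using that zero_mem by (simp add: relation_of_def above_def)
    show "(x, z) \<in> relation_of above A'"
      if "(x, y) \<in> relation_of above A'" "(y, z) \<in> relation_of above A'" for x y z
      using that diff_trans by (auto simp: relation_of_def above_def)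
    show "x = y" if "(x, y) \<in> relation_of above A'" "(y, x) \<in> relation_of above A'" for x y
      using that diff_antisym by (auto simp: relation_of_def above_def)
  qed
  moreover have "\<exists>u\<in>A'. \<forall>c\<in>C. above c u" if C: "C \<in> Chains (relation_of above A')" for C
  proof -
    have "c - d \<in> P \<or> d - c \<in> P" if "c \<in> C" "d \<in> C" for c d
      using C that unfolding Chains_def relation_of_def above_def by auto
    then show ?thesis
      using compact_chain_has_lower_bound[OF closed A'(1) _ Chains_relation_of[OF C]] A'(2)
      unfolding above_def by blast
  qed
  ultimately obtain m where m: "m \<in> A'" "\<And>w. w \<in> A' \<Longrightarrow> above m w \<Longrightarrow> w = m"
    using predicate_Zorn by metis
  have "m \<in> efficient A P"
    unfolding mem_efficient_iff
  proof (intro conjI ballI impI)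
    show "m \<in> A" using m(1) unfolding A'_def by simp
    fix p assume p: "p \<in> P" "m - p \<in> A"
    have "a - (m - p) \<in> P" using diff_trans[of a m "m - p"] p(1) m(1) unfolding A'_def by simp
    then have "m - p = m" using m(2)[of "m - p"] p unfolding A'_def above_def by simp
    then show "p = 0" by simp
  qed
  then show ?thesis using m(1) unfolding A'_def by blast
qed

(* Efficient points of closures: the domination hypothesis passes from A to cl A because
   cl B + P is closed. *)
lemma efficient_closure_eq_if_dominated:
  assumes closed: "closed P" and B: "B \<subseteq> closure A" "compact (closure B)"
    and dom: "\<And>a. a \<in> A \<Longrightarrow> \<exists>b\<in>B. a - b \<in> P"
  shows "efficient (closure A) P = efficient (closure B) P"
proof (rule efficient_eq_if_dominated)
  show "closure B \<subseteq> closure A" using B(1) closure_minimal by blast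
  define D where "D = (\<Union>p\<in>P. \<Union>b\<in>closure B. {p + b})"
  have "A \<subseteq> D"
  proof
    fix a assume "a \<in> A"
    then obtain b where "b \<in> B" "a - b \<in> P" using dom by blast
    then have "a = (a - b) + b" "b \<in> closure B" using closure_subset by auto
    then show "a \<in> D" unfolding D_def using \<open>a - b \<in> P\<close> by blast
  qed
  moreover have "closed D" unfolding D_def using closed_compact_sums[OF closed B(2)] .
  ultimately have "closure A \<subseteq> D" by (rule closure_minimal)
  then show "\<exists>b\<in>closure B. a - b \<in> P" if a: "a \<in> closure A" for a
  proof -
    obtain p b where "p \<in> P" "b \<in> closure B" "a = p + b"
      using \<open>closure A \<subseteq> D\<close> a unfolding D_def by blast
    then show ?thesis by (metis add_diff_cancel_right')
  qed
qed

end

lemma measurable_on_subset: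
  fixes u :: "'a::euclidean_space \<Rightarrow> 'b::euclidean_space"
  assumes u: "u measurable_on S" and T: "T \<in> sets lebesgue" "T \<subseteq> S"
  shows "u measurable_on T"
proof -
  have "(\<lambda>r. if r \<in> T then (if r \<in> S then u r else 0) else 0) measurable_on UNIV"
    by (rule measurable_on_restrict[OF measurable_on_UNIV[THEN iffD2, OF u] T(1)])
  moreover have "(\<lambda>r. if r \<in> T then (if r \<in> S then u r else 0) else 0) = (\<lambda>r. if r \<in> T then u r else 0)"
    using T(2) by (auto simp: fun_eq_iff)
  ultimately have "(\<lambda>r. if r \<in> T then u r else 0) measurable_on UNIV"
    by simp
  then show ?thesis
    by (rule measurable_on_UNIV[THEN iffD1])
qed

(* The function is extended to a continuous one on the
   whole space by Tietze's theorem to get measurability of the composition. *)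
lemma integrable_continuous_compose_measurable:
  fixes g :: "'a::euclidean_space \<times> 'c::euclidean_space \<Rightarrow> 'b::euclidean_space" and a b :: real
  assumes U: "closed U" and g_cont: "continuous_on (UNIV \<times> U) g"
    and g_bnd: "\<And>z v. v \<in> U \<Longrightarrow> norm (g (z, v)) \<le> M"
    and y: "continuous_on {a..b} y" and u: "u measurable_on {a..b}"
    and uU: "\<And>r. r \<in> {a..b} \<Longrightarrow> u r \<in> U"
  shows "(\<lambda>r. g (y r, u r)) integrable_on {a..b}"
proof -
  have "closedin (top_of_set UNIV) (UNIV \<times> U)"
    using U by (simp add: closed_Times)
  then obtain h where h: "continuous_on UNIV h" "\<And>z. z \<in> UNIV \<times> U \<Longrightarrow> h z = g z"
    using Tietze_unbounded[OF g_cont] by blast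
  have S: "{a..b} \<in> sets lebesgue" by auto
  have "y measurable_on {a..b}"
    by (rule measurable_on_iff_borel_measurable[OF S, THEN iffD2,
          OF continuous_imp_measurable_on_sets_lebesgue[OF y S]])
  then have "(\<lambda>r. if r \<in> {a..b} then (y r, u r) else 0) measurable_on UNIV"
    by (rule measurable_on_UNIV[THEN iffD2, OF measurable_on_Pair[OF _ u]])
  then have "(\<lambda>r. if r \<in> {a..b} then (h \<circ> (\<lambda>r. if r \<in> {a..b} then (y r, u r) else 0)) r else 0)
      measurable_on UNIV"
    by (rule measurable_on_restrict[OF measurable_on_compose_continuous[OF _ h(1)] S])
  moreover have "(\<lambda>r. if r \<in> {a..b} then (h \<circ> (\<lambda>r. if r \<in> {a..b} then (y r, u r) else 0)) r else 0)
      = (\<lambda>r. if r \<in> {a..b} then g (y r, u r) else 0)"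
    using h(2) uU by (auto simp: fun_eq_iff)
  ultimately have "(\<lambda>r. if r \<in> {a..b} then g (y r, u r) else 0) measurable_on UNIV"
    by simp
  then have "(\<lambda>r. g (y r, u r)) measurable_on {a..b}"
    by (rule measurable_on_UNIV[THEN iffD1])
  then have "(\<lambda>r. g (y r, u r)) \<in> borel_measurable (lebesgue_on {a..b})"
    by (rule measurable_on_iff_borel_measurable[OF S, THEN iffD1])
  then show ?thesis
  proof (rule measurable_bounded_by_integrable_imp_integrable[OF _ integrable_const_ivl _ S])
    show "norm (g (y r, u r)) \<le> M" if "r \<in> {a..b}" for r
      using g_bnd uU that by blast
  qed
qed

lemma is_traj_restrict:
  assumes y: "is_traj f T t x u y" and s: "t \<le> s" "s \<le> T"
  shows "is_traj f T s (y s) u y"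
  unfolding is_traj_def
proof (intro conjI ballI)
  let ?F = "\<lambda>q. f (y q) (u q)"
  show "continuous_on {s..T} y"
    using y s unfolding is_traj_def by (meson atLeastatMost_subset_iff continuous_on_subset order_refl)
  fix r assume r: "r \<in> {s..T}"
  have F: "?F integrable_on {t..r}" and yr: "y r = x + integral {t..r} ?F"
    using y r s unfolding is_traj_def by auto
  have ys: "y s = x + integral {t..s} ?F"
    using y s unfolding is_traj_def by auto
  show "?F integrable_on {s..r}"
    using integrable_on_subinterval[OF F] s by auto
  have "integral {t..s} ?F + integral {s..r} ?F = integral {t..r} ?F"
    using Henstock_Kurzweil_Integration.integral_combine[OF _ _ F, of s] s r by auto
  then show "y r = y s + integral {s..r} ?F"
    using yr ys by (simp add: algebra_simps)
qed

lemma admissible_concat: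
  assumes u: "u \<in> admissible_controls T U" and u': "u' \<in> admissible_controls T U"
  shows "(\<lambda>r. if r \<le> s then u r else u' r) \<in> admissible_controls T U"
proof -
  let ?w = "\<lambda>r. if r \<le> s then u r else u' r"
  let ?ext = "\<lambda>v r. if r \<in> {0..T} then v r else 0"
  have "u measurable_on {0..T}" "u' measurable_on {0..T}"
    using u u' unfolding admissible_controls_def by auto
  note ext = this[THEN measurable_on_UNIV[THEN iffD2]]
  have "indicat_real {..s} measurable_on UNIV" "indicat_real {s<..} measurable_on UNIV"
    by (rule indicator_measurable_on; simp)+
  then have "(\<lambda>r. indicat_real {..s} r *\<^sub>R ?ext u r + indicat_real {s<..} r *\<^sub>R ?ext u' r)
      measurable_on UNIV"
    by (intro measurable_on_add measurable_on_scaleR ext)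
  moreover have "(\<lambda>r. indicat_real {..s} r *\<^sub>R ?ext u r + indicat_real {s<..} r *\<^sub>R ?ext u' r)
      = ?ext ?w"
    by (simp add: fun_eq_iff indicator_def)
  ultimately have "?ext ?w measurable_on UNIV"
    by simp
  then have "?w measurable_on {0..T}"
    by (rule measurable_on_UNIV[THEN iffD1])
  moreover have "bounded (?w ` {0..T})"
  proof (rule bounded_subset)
    show "bounded (u ` {0..T} \<union> u' ` {0..T})"
      using u u' unfolding admissible_controls_def by simp
  qed auto
  ultimately show ?thesis
    using u u' unfolding admissible_controls_def by simp
qed

lemma is_traj_concat:
  assumes y: "is_traj f T t x u y" and y': "is_traj f T s (y s) u' y'" and s: "t \<le> s" "s \<le> T"
  shows "is_traj f T t x (\<lambda>r. if r \<le> s then u r else u' r) (\<lambda>r. if r \<le> s then y r else y' r)"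
proof -
  let ?u = "\<lambda>r. if r \<le> s then u r else u' r"
  let ?y = "\<lambda>r. if r \<le> s then y r else y' r"
  let ?F = "\<lambda>q. f (y q) (u q)"
  let ?F' = "\<lambda>q. f (y' q) (u' q)"
  let ?G = "\<lambda>q. f (?y q) (?u q)"
  have y's: "y' s = y s" using y' s unfolding is_traj_def by auto
  have ys: "y s = x + integral {t..s} ?F" and F: "?F integrable_on {t..s}"
    using y s unfolding is_traj_def by auto
  have G_eq_F: "?G q = ?F q" if "q \<le> s" for q using that by simp
  have cont: "continuous_on {t..T} ?y"
  proof (rule continuous_on_cases_le[where h="\<lambda>r. r", OF _ _ continuous_on_id])
    show "continuous_on {r \<in> {t..T}. r \<le> s} y"
      using y unfolding is_traj_def by (rule continuous_on_subset[OF conjunct1]) auto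
    show "continuous_on {r \<in> {t..T}. s \<le> r} y'"
      using y' unfolding is_traj_def by (rule continuous_on_subset[OF conjunct1]) auto
    show "\<And>r. r \<in> {t..T} \<Longrightarrow> r = s \<Longrightarrow> y r = y' r" using y's by simp
  qed
  have "?G integrable_on {t..r} \<and> ?y r = x + integral {t..r} ?G" if r: "r \<in> {t..T}" for r
  proof (cases "r \<le> s")
    case True
    have "?F integrable_on {t..r}" "y r = x + integral {t..r} ?F"
      using y r unfolding is_traj_def by auto
    moreover have "?G integrable_on {t..r} \<longleftrightarrow> ?F integrable_on {t..r}"
      "integral {t..r} ?G = integral {t..r} ?F"
      using True G_eq_F by (auto intro!: integrable_cong integral_cong)
    ultimately show ?thesis using True by simp
  next
    case False
    have r': "r \<in> {s..T}" using False r by auto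
    have F': "?F' integrable_on {s..r}" and y'r: "y' r = y' s + integral {s..r} ?F'"
      using y' r' unfolding is_traj_def by auto
    have G_eq_F': "?G q = ?F' q" if "q \<in> {s..r} - {s}" for q using that by auto
    have G1: "?G integrable_on {t..s}" "integral {t..s} ?G = integral {t..s} ?F"
      using F G_eq_F by (auto intro: integrable_spike_finite[where S="{}"] integral_cong)
    have G2: "?G integrable_on {s..r}"
      by (rule integrable_spike_finite[where S="{s}", OF _ G_eq_F' F']) simp
    have G2_eq: "integral {s..r} ?G = integral {s..r} ?F'"
      by (rule integral_spike[where S="{s}"]) (use G_eq_F' in auto)
    have sr: "t \<le> s" "s \<le> r" using s False by auto
    have G: "?G integrable_on {t..r}"
      by (rule Henstock_Kurzweil_Integration.integrable_combine[OF sr G1(1) G2])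
    have "integral {t..r} ?G = integral {t..s} ?F + integral {s..r} ?F'"
      using Henstock_Kurzweil_Integration.integral_combine[OF sr G] G1(2) G2_eq by simp
    then show ?thesis using G ys y'r y's False by (simp add: algebra_simps)
  qed
  then show ?thesis
    using cont unfolding is_traj_def by blast
qed

locale running_cost =
  fixes L :: "'a::euclidean_space \<Rightarrow> 'c::euclidean_space \<Rightarrow> 'b::euclidean_space"
    and U :: "'c set" and M :: real
  assumes U_closed: "closed U"
    and L_cont: "continuous_on (UNIV \<times> U) (\<lambda>(z, v). L z v)"
    and L_bnd: "\<And>z v. v \<in> U \<Longrightarrow> norm (L z v) \<le> M"
begin

lemma running_cost_integrable:
  assumes t: "0 \<le> t" and u: "u \<in> admissible_controls T U" and y: "is_traj f T t x u y"
  shows "(\<lambda>r. L (y r) (u r)) integrable_on {t..T}"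
proof -
  have "(\<lambda>r. (\<lambda>(z, v). L z v) (y r, u r)) integrable_on {t..T}"
  proof (rule integrable_continuous_compose_measurable[OF U_closed L_cont])
    show "continuous_on {t..T} y" using y unfolding is_traj_def by blast
    show "u measurable_on {t..T}"
      using u t measurable_on_subset[of u "{0..T}" "{t..T}"] unfolding admissible_controls_def by auto
    show "r \<in> {t..T} \<Longrightarrow> u r \<in> U" for r using u t unfolding admissible_controls_def by auto
  qed (use L_bnd in auto)
  then show ?thesis by simp
qed

lemma cost_split:
  assumes "0 \<le> t" "t \<le> s" "s \<le> T"
    and "u \<in> admissible_controls T U" "is_traj f T t x u y"
  shows "cost L t T y u = cost L t s y u + cost L s T y u"
  unfolding cost_def
  using Henstock_Kurzweil_Integration.integral_combine[OF assms(2,3) running_cost_integrable[OF assms(1,4,5)]]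
  by simp

(* Y(t,x) lies in the ball of radius M (T - t). *)
lemma Yset_bounded:
  assumes t: "0 \<le> t" "t \<le> T"
  shows "bounded (Yset f L U T t x)"
proof -
  have "norm w \<le> M * (T - t)" if w: "w \<in> Yset f L U T t x" for w
  proof -
    obtain u y where uy: "u \<in> admissible_controls T U" "is_traj f T t x u y" "w = cost L t T y u"
      using w unfolding Yset_def by blast
    have "norm (integral {t..T} (\<lambda>r. L (y r) (u r))) \<le> integral {t..T} (\<lambda>r. M)"
      using running_cost_integrable[OF t(1) uy(1,2)] uy(1) L_bnd t(1)
      by (intro integral_norm_bound_integral) (auto simp: admissible_controls_def)
    then show ?thesis using uy(3) t by (simp add: cost_def mult.commute)
  qed
  then show ?thesis unfolding bounded_iff by blast
qed

lemma Yset_decompose: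
  assumes "0 \<le> t" "t \<le> s" "s \<le> T" and w: "w \<in> Yset f L U T t x"
  obtains u y where "u \<in> admissible_controls T U" "is_traj f T t x u y"
    "w - cost L t s y u \<in> Yset f L U T s (y s)"
proof -
  obtain u y where uy: "u \<in> admissible_controls T U" "is_traj f T t x u y" "w = cost L t T y u"
    using w unfolding Yset_def by blast
  have "w - cost L t s y u = cost L s T y u"
    using cost_split[OF assms(1-3) uy(1,2)] uy(3) by simp
  moreover have "cost L s T y u \<in> Yset f L U T s (y s)"
    using uy(1) is_traj_restrict[OF uy(2) assms(2,3)] unfolding Yset_def by blast
  ultimately show ?thesis using that uy(1,2) by simp
qed

lemma Yset_compose:
  assumes "0 \<le> t" "t \<le> s" "s \<le> T"
    and uy: "u \<in> admissible_controls T U" "is_traj f T t x u y"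
    and w: "w \<in> Yset f L U T s (y s)"
  shows "cost L t s y u + w \<in> Yset f L U T t x"
proof -
  obtain u' y' where uy': "u' \<in> admissible_controls T U" "is_traj f T s (y s) u' y'"
    "w = cost L s T y' u'"
    using w unfolding Yset_def by blast
  define v where "v = (\<lambda>r. if r \<le> s then u r else u' r)"
  define z where "z = (\<lambda>r. if r \<le> s then y r else y' r)"
  have v: "v \<in> admissible_controls T U"
    unfolding v_def by (rule admissible_concat[OF uy(1) uy'(1)])
  have z: "is_traj f T t x v z"
    unfolding v_def z_def by (rule is_traj_concat[OF uy(2) uy'(2) assms(2,3)])
  have "cost L t s z v = cost L t s y u"
    unfolding cost_def z_def v_def by (rule integral_cong) auto
  moreover have "cost L s T z v = cost L s T y' u'"
    unfolding cost_def z_def v_def by (rule integral_spike[where S="{s}"]) auto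
  ultimately have "cost L t T z v = cost L t s y u + w"
    using cost_split[OF assms(1-3) v z] uy'(3) by simp
  moreover have "cost L t T z v \<in> Yset f L U T t x"
    using v z unfolding Yset_def by blast
  ultimately show ?thesis by simp
qed

end

lemma mem_Ytilde_iff:
  "b \<in> Ytilde f L U T P \<tau> t x \<longleftrightarrow>
    (\<exists>u y v. u \<in> admissible_controls T U \<and> is_traj f T t x u y \<and>
       v \<in> Vfun f L U T P (t + \<tau>) (y (t + \<tau>)) \<and> b = cost L t (t + \<tau>) y u + v)"
  unfolding Ytilde_def by blast

context running_cost
begin

(* Ytilde lies in cl Y(t,x): its points are costs on [t,s] plus limits of costs from the
   intermediate state. *)
lemma Ytilde_subset_closure_Yset:
  assumes "0 \<le> t" "0 \<le> \<tau>" "t + \<tau> \<le> T"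
  shows "Ytilde f L U T P \<tau> t x \<subseteq> closure (Yset f L U T t x)"
proof
  fix b assume "b \<in> Ytilde f L U T P \<tau> t x"
  then obtain u y v where uy: "u \<in> admissible_controls T U" "is_traj f T t x u y"
    and v: "v \<in> Vfun f L U T P (t + \<tau>) (y (t + \<tau>))" and b: "b = cost L t (t + \<tau>) y u + v"
    unfolding mem_Ytilde_iff by blast
  let ?c = "cost L t (t + \<tau>) y u"
  have "(+) ?c ` Yset f L U T (t + \<tau>) (y (t + \<tau>)) \<subseteq> Yset f L U T t x"
    using Yset_compose[of t "t + \<tau>" T u f x y] assms uy by auto
  then have "closure ((+) ?c ` Yset f L U T (t + \<tau>) (y (t + \<tau>))) \<subseteq> closure (Yset f L U T t x)"
    by (rule closure_mono)
  moreover have "v \<in> closure (Yset f L U T (t + \<tau>) (y (t + \<tau>)))"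
    using v unfolding Vfun_def efficient_def by blast
  ultimately show "b \<in> closure (Yset f L U T t x)"
    using b by (auto simp: closure_translation)
qed

(* Every point of Y(t,x) dominates a point of Ytilde: split it at s and replace the remaining
   cost by an efficient point of cl Y(s, y(s)) below it. *)
lemma Yset_dominated_by_Ytilde:
  assumes P: "ordering_cone P" "closed P"
    and "0 \<le> t" "0 \<le> \<tau>" "t + \<tau> \<le> T" and w: "w \<in> Yset f L U T t x"
  shows "\<exists>b\<in>Ytilde f L U T P \<tau> t x. w - b \<in> P"
proof -
  obtain u y where uy: "u \<in> admissible_controls T U" "is_traj f T t x u y"
    and rest: "w - cost L t (t + \<tau>) y u \<in> Yset f L U T (t + \<tau>) (y (t + \<tau>))"
    using Yset_decompose[of t "t + \<tau>" T w f x] assms by auto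
  let ?c = "cost L t (t + \<tau>) y u"
  have "compact (closure (Yset f L U T (t + \<tau>) (y (t + \<tau>))))"
    using Yset_bounded assms by (simp add: compact_closure)
  then obtain m where m: "m \<in> Vfun f L U T P (t + \<tau>) (y (t + \<tau>))" "(w - ?c) - m \<in> P"
    using ordering_cone.exists_efficient_below[OF P] rest closure_subset
    unfolding Vfun_def by blast
  have "?c + m \<in> Ytilde f L U T P \<tau> t x"
    unfolding mem_Ytilde_iff using uy m(1) by blast
  moreover have "w - (?c + m) \<in> P" using m(2) by (simp add: algebra_simps)
  ultimately show ?thesis by blast
qed

end

theorem proposition5p1:
  fixes f :: "'a::euclidean_space \<Rightarrow> 'c::euclidean_space \<Rightarrow> 'a"
    and L :: "'a \<Rightarrow> 'c \<Rightarrow> 'b::euclidean_space"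
    and U :: "'c set" and P :: "'b set"
    and T K_f M_f K_L M_L t \<tau> :: real and x :: 'a
  assumes T_pos: "T > 0"
    and U_compact: "compact U" and U_ne: "U \<noteq> {}"
    and f_cont: "continuous_on (UNIV \<times> U) (\<lambda>(z, v). f z v)"
    and f_lip: "\<And>x1 x2 v. v \<in> U \<Longrightarrow> norm (f x1 v - f x2 v) \<le> K_f * norm (x1 - x2)"
    and f_bnd: "\<And>z v. v \<in> U \<Longrightarrow> norm (f z v) \<le> M_f"
    and L_cont: "continuous_on (UNIV \<times> U) (\<lambda>(z, v). L z v)"
    and L_bnd: "\<And>z v. v \<in> U \<Longrightarrow> norm (L z v) \<le> M_L"
    and L_lip: "\<And>x1 x2 v. v \<in> U \<Longrightarrow> norm (L x1 v - L x2 v) \<le> K_L * norm (x1 - x2)"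
    and P_closed: "closed P" and P_convex: "convex P" and P_cone: "cone P"
    and P_pointed: "P \<inter> uminus ` P = {0}" and P_zero: "0 \<in> P"
    and P_int: "interior P \<noteq> {}"
    and t_in: "t \<in> {0..T}"
    and tau_pos: "0 < \<tau>" and tau_le: "\<tau> \<le> T - t"
  shows "Vfun f L U T P t x = efficient (closure (Ytilde f L U T P \<tau> t x)) P"
proof -
  interpret running_cost L U M_L
    using U_compact L_cont L_bnd by unfold_locales (auto intro: compact_imp_closed)
  interpret ordering_cone P
    using P_convex P_cone P_pointed by unfold_locales
  have times: "0 \<le> t" "0 \<le> \<tau>" "t + \<tau> \<le> T" "t \<le> T"
    using t_in tau_pos tau_le by auto
  let ?Y = "Yset f L U T t x" and ?Ytilde = "Ytilde f L U T P \<tau> t x"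
  have sub: "?Ytilde \<subseteq> closure ?Y"
    using Ytilde_subset_closure_Yset[OF times(1-3)] .
  have "bounded ?Ytilde"
    using Yset_bounded[OF times(1,4)] sub bounded_closure bounded_subset by blast
  then have "compact (closure ?Ytilde)"
    by (simp add: compact_closure)
  moreover have "\<exists>b\<in>?Ytilde. w - b \<in> P" if "w \<in> ?Y" for w
    using Yset_dominated_by_Ytilde[OF _ P_closed times(1-3) that] ordering_cone_axioms by blast
  ultimately show ?thesis
    unfolding Vfun_def using efficient_closure_eq_if_dominated[OF P_closed sub] by blast
qed

end
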